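(* Let $X$ be a Polish space, $f:X\to\mathbb R$ a Baire-1 function and $a<b$ reals. Let $F\subseteq X$ be closed, $x\in X$ and $\xi<\omega_1$ with $x\in F^{(\xi)}_{f,a,b}$. Then there exists a countable compact set $K\subseteq F$ such that $x\in K^{(\xi)}_{f,a,b}$.
   Context: For closed $F\subseteq X$: $F'_{f,a,b}=\overline{F\cap[f<a]}\cap\overline{F\cap[f>b]}$, where $[f<a]=\{x:f(x)<a\}$, $[f>b]=\{x:f(x)>b\}$; iterated derivatives $F^{(0)}_{f,a,b}=F$, $F^{(\xi+1)}_{f,a,b}=(F^{(\xi)}_{f,a,b})'_{f,a,b}$, $F^{(\lambda)}_{f,a,b}=\bigcap_{\xi<\lambda}F^{(\xi)}_{f,a,b}$ for limit $\lambda$. *)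

theory Defs
  imports "HOL-Analysis.Analysis"
begin

definition baire1 :: "('a::topological_space \<Rightarrow> real) \<Rightarrow> bool" where
  "baire1 f \<longleftrightarrow> (\<exists>g :: nat \<Rightarrow> 'a \<Rightarrow> real.
      (\<forall>n. continuous_on UNIV (g n)) \<and> (\<forall>x. (\<lambda>n. g n x) \<longlonglongrightarrow> f x))"

definition fab_deriv :: "('a::topological_space \<Rightarrow> real) \<Rightarrow> real \<Rightarrow> real \<Rightarrow> 'a set \<Rightarrow> 'a set" where
  "fab_deriv f a b F = closure (F \<inter> {x. f x < a}) \<inter> closure (F \<inter> {x. f x > b})"

text \<open>Ordinals are represented as ranks of elements of a
  well-order r: the value at i is F^(rank i).\<close>
definition imm_pred :: "'i rel \<Rightarrow> 'i \<Rightarrow> 'i \<Rightarrow> bool" where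
  "imm_pred r j i \<longleftrightarrow> (j, i) \<in> r - Id \<and> (\<forall>k. (k, i) \<in> r - Id \<longrightarrow> (k, j) \<in> r)"

definition iter_fab_deriv ::
  "('a::topological_space \<Rightarrow> real) \<Rightarrow> real \<Rightarrow> real \<Rightarrow> 'i rel \<Rightarrow> 'a set \<Rightarrow> 'i \<Rightarrow> 'a set" where
  "iter_fab_deriv f a b r F = wfrec (r - Id) (\<lambda>D i.
     if \<not> (\<exists>j. (j, i) \<in> r - Id) then F
     else if (\<exists>j. imm_pred r j i) then fab_deriv f a b (D (THE j. imm_pred r j i))
     else \<Inter> {D j | j. (j, i) \<in> r - Id})"

end

theory Submission
  imports Defs
begin

section \<open>The recursion equations of the iterated derivative\<close>

lemma Well_order_strict_wf: "Well_order r \<Longrightarrow> wf (r - Id)"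
  by (simp add: well_order_on_def)

lemma imm_pred_unique:
  assumes "Well_order r" "imm_pred r j i" "imm_pred r k i"
  shows "j = k"
proof -
  have "antisym r"
    using assms(1) by (simp add: well_order_on_def linear_order_on_def partial_order_on_def)
  moreover have "(j, k) \<in> r" "(k, j) \<in> r"
    using assms(2,3) unfolding imm_pred_def by blast+
  ultimately show ?thesis by (auto dest: antisymD)
qed

text \<open>The recursion equation behind the wfrec definition.  It must not be used as a
  simplification rule, since its right-hand side contains the left-hand side.\<close>

lemma iter_fab_deriv_unfold:
  assumes "Well_order r"
  shows "iter_fab_deriv f a b r F i = (if \<not> (\<exists>j. (j, i) \<in> r - Id) then F
     else if (\<exists>j. imm_pred r j i)
       then fab_deriv f a b (iter_fab_deriv f a b r F (THE j. imm_pred r j i))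
     else \<Inter> {iter_fab_deriv f a b r F j | j. (j, i) \<in> r - Id})"
proof -
  have "imm_pred r (THE j. imm_pred r j i) i" if "imm_pred r j i" for j
    using that by (rule theI) (use imm_pred_unique[OF assms] that in blast)
  then show ?thesis
    unfolding iter_fab_deriv_def
    by (subst wfrec[OF Well_order_strict_wf[OF assms]]) (auto simp: cut_def imm_pred_def)
qed

lemma iter_fab_deriv_initial:
  "Well_order r \<Longrightarrow> \<not> (\<exists>j. (j, i) \<in> r - Id) \<Longrightarrow> iter_fab_deriv f a b r F i = F"
  by (subst iter_fab_deriv_unfold) simp_all

lemma iter_fab_deriv_succ:
  assumes "Well_order r" "imm_pred r j i"
  shows "iter_fab_deriv f a b r F i = fab_deriv f a b (iter_fab_deriv f a b r F j)"
proof -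
  have "(THE j. imm_pred r j i) = j"
    using assms by (blast intro: the_equality imm_pred_unique)
  moreover have "(j, i) \<in> r - Id"
    using assms(2) by (simp add: imm_pred_def)
  ultimately show ?thesis
    using assms by (subst iter_fab_deriv_unfold) auto
qed

lemma iter_fab_deriv_limit:
  assumes "Well_order r" "(j, i) \<in> r - Id" "\<not> (\<exists>j. imm_pred r j i)"
  shows "iter_fab_deriv f a b r F i = \<Inter> {iter_fab_deriv f a b r F j | j. (j, i) \<in> r - Id}"
proof -
  have "\<exists>j. (j, i) \<in> r - Id" using assms(2) by blast
  with assms(1,3) show ?thesis by (subst iter_fab_deriv_unfold) simp_all
qed

lemma Well_order_rank_induct [consumes 1, case_names initial succ limit]:
  assumes "Well_order r"
    and initial: "\<And>i. \<not> (\<exists>j. (j, i) \<in> r - Id) \<Longrightarrow> P i"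
    and succ: "\<And>i j. imm_pred r j i \<Longrightarrow> P j \<Longrightarrow> P i"
    and limit: "\<And>i j. (j, i) \<in> r - Id \<Longrightarrow> \<not> (\<exists>j. imm_pred r j i) \<Longrightarrow>
                  (\<And>k. (k, i) \<in> r - Id \<Longrightarrow> P k) \<Longrightarrow> P i"
  shows "P i"
  using Well_order_strict_wf[OF assms(1)]
proof (induction i rule: wf_induct_rule)
  case (less i)
  consider "\<not> (\<exists>j. (j, i) \<in> r - Id)" | j where "imm_pred r j i"
    | j where "(j, i) \<in> r - Id" "\<not> (\<exists>j. imm_pred r j i)"
    by blast
  then show ?case
  proof cases
    case 1
    then show ?thesis by (rule initial)
  next
    case (2 j)
    then have "(j, i) \<in> r - Id" by (simp add: imm_pred_def)
    with 2 show ?thesis using succ less.IH by blast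
  next
    case (3 j)
    then show ?thesis using limit less.IH by blast
  qed
qed

lemma fab_deriv_mono: "A \<subseteq> B \<Longrightarrow> fab_deriv f a b A \<subseteq> fab_deriv f a b B"
  unfolding fab_deriv_def by (meson Int_mono closure_mono order_refl)

lemma iter_fab_deriv_mono:
  assumes "Well_order r" "G \<subseteq> H"
  shows "iter_fab_deriv f a b r G i \<subseteq> iter_fab_deriv f a b r H i"
  using assms(1)
proof (induction i rule: Well_order_rank_induct)
  case (initial i)
  then show ?case using assms by (simp add: iter_fab_deriv_initial)
next
  case (succ i j)
  then show ?case using assms(1) by (simp add: iter_fab_deriv_succ fab_deriv_mono)
next
  case (limit i j)
  then show ?case using assms(1) by (simp add: iter_fab_deriv_limit) blast
qed

lemma iter_fab_deriv_subset:
  assumes "Well_order r" "closed G"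
  shows "iter_fab_deriv f a b r G i \<subseteq> G"
  using assms(1)
proof (induction i rule: Well_order_rank_induct)
  case (initial i)
  then show ?case using assms by (simp add: iter_fab_deriv_initial)
next
  case (succ i j)
  have "fab_deriv f a b (iter_fab_deriv f a b r G j) \<subseteq> closure G"
    unfolding fab_deriv_def using succ.IH by (meson closure_mono inf.coboundedI1 le_infI1)
  then show ?case using assms by (simp add: iter_fab_deriv_succ[OF _ succ.hyps])
next
  case (limit i j)
  then show ?case using assms(1) by (simp add: iter_fab_deriv_limit) blast
qed

lemma closure_Int_local:
  assumes "open U" "A \<inter> U = B \<inter> U"
  shows "closure (A \<inter> S) \<inter> U = closure (B \<inter> S) \<inter> U"
proof -
  have restrict: "closure (C \<inter> S) \<inter> U = closure (C \<inter> U \<inter> S) \<inter> U" for C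
  proof
    show "closure (C \<inter> S) \<inter> U \<subseteq> closure (C \<inter> U \<inter> S) \<inter> U"
      using open_Int_closure_subset[OF assms(1), of "C \<inter> S"] by (auto simp: Int_ac)
    show "closure (C \<inter> U \<inter> S) \<inter> U \<subseteq> closure (C \<inter> S) \<inter> U"
      by (meson Int_mono closure_mono inf_le1 inf_mono order_refl)
  qed
  show ?thesis using restrict[of A] restrict[of B] assms(2) by simp
qed

lemma iter_fab_deriv_local:
  assumes "Well_order r" "open U"
  shows "iter_fab_deriv f a b r (G \<inter> U) i \<inter> U = iter_fab_deriv f a b r G i \<inter> U"
  using assms(1)
proof (induction i rule: Well_order_rank_induct)
  case (initial i)
  then show ?case using assms by (auto simp add: iter_fab_deriv_initial)
next
  case (succ i j)
  have "fab_deriv f a b (iter_fab_deriv f a b r (G \<inter> U) j) \<inter> U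
        = fab_deriv f a b (iter_fab_deriv f a b r G j) \<inter> U"
    unfolding fab_deriv_def
    using closure_Int_local[OF assms(2) succ.IH, of "{x. f x < a}"]
          closure_Int_local[OF assms(2) succ.IH, of "{x. f x > b}"] by blast
  then show ?case by (simp only: iter_fab_deriv_succ[OF assms(1) succ.hyps])
next
  case (limit i j)
  then show ?case using assms(1) by (simp add: iter_fab_deriv_limit) blast
qed

lemma iter_fab_deriv_transfer:
  fixes x :: "'a::metric_space"
  assumes "Well_order r" "y \<in> iter_fab_deriv f a b r G i"
    and "dist x y < \<rho>" "G \<inter> cball x \<rho> \<subseteq> L"
  shows "y \<in> iter_fab_deriv f a b r L i"
proof -
  have "y \<in> iter_fab_deriv f a b r G i \<inter> ball x \<rho>" using assms(2,3) by simp
  then have "y \<in> iter_fab_deriv f a b r (G \<inter> ball x \<rho>) i"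
    using iter_fab_deriv_local[OF assms(1) open_ball, of f a b G x \<rho> i] by blast
  moreover have "G \<inter> ball x \<rho> \<subseteq> L" using assms(4) by auto
  ultimately show ?thesis using iter_fab_deriv_mono[OF assms(1)] by blast
qed

section \<open>Compact sets shrinking to a point\<close>

text \<open>If only finitely many radii exceed any given e > 0, then x together with the
  pieces of the compact sets K j within distance rad j of x is compact: an open set
  around x swallows all but finitely many pieces.\<close>

lemma compact_shrinking_union:
  fixes x :: "'a::metric_space"
  assumes compact: "\<And>j. j \<in> P \<Longrightarrow> compact (K j)"
    and few_large: "\<And>e. e > 0 \<Longrightarrow> finite {j\<in>P. e \<le> rad j}"
  shows "compact (insert x (\<Union>j\<in>P. K j \<inter> cball x (rad j)))" (is "compact ?L")
  unfolding compact_eq_Heine_Borel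
proof (intro allI impI)
  fix C assume C: "(\<forall>c\<in>C. open c) \<and> ?L \<subseteq> \<Union> C"
  then obtain U where U: "U \<in> C" "x \<in> U" "open U" by blast
  then obtain e where e: "e > 0" "ball x e \<subseteq> U" using open_contains_ball by blast
  define Q where "Q = {j\<in>P. e \<le> rad j}"
  have "finite Q" using few_large[OF e(1)] by (simp add: Q_def)
  then have "compact (\<Union>j\<in>Q. K j \<inter> cball x (rad j))"
    using compact Q_def by (intro compact_UN) auto
  moreover have "(\<Union>j\<in>Q. K j \<inter> cball x (rad j)) \<subseteq> \<Union> C" using C Q_def by blast
  ultimately obtain D where D: "D \<subseteq> C" "finite D" "(\<Union>j\<in>Q. K j \<inter> cball x (rad j)) \<subseteq> \<Union> D"
    by (rule compactE) (use C in blast)+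
  have "?L \<subseteq> \<Union> (insert U D)"
  proof
    fix y assume "y \<in> ?L"
    then consider "y = x" | j where "j \<in> P" "y \<in> K j \<inter> cball x (rad j)" by blast
    then show "y \<in> \<Union> (insert U D)"
    proof cases
      case 1
      then show ?thesis using U by blast
    next
      case (2 j)
      show ?thesis
      proof (cases "e \<le> rad j")
        case True
        then have "j \<in> Q" using 2 by (simp add: Q_def)
        then show ?thesis using 2 D(3) by blast
      next
        case False
        then have "y \<in> ball x e" using 2 by simp
        then show ?thesis using e(2) by blast
      qed
    qed
  qed
  then show "\<exists>D'\<subseteq>C. finite D' \<and> ?L \<subseteq> \<Union> D'"
    using D U by (intro exI[of _ "insert U D"]) simp
qed

lemma finite_large_inverse_index:
  assumes "inj_on g P" "(e::real) > 0"
  shows "finite {j\<in>P. e \<le> 1 / (real (g j) + 1)}" (is "finite ?S")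
proof -
  have "g ` ?S \<subseteq> {..nat \<lceil>1 / e\<rceil>}"
  proof
    fix n assume "n \<in> g ` ?S"
    then have "e * (real n + 1) \<le> 1" by (auto simp: field_simps)
    then have "real n \<le> 1 / e" using assms(2) by (simp add: field_simps)
    then show "n \<in> {..nat \<lceil>1 / e\<rceil>}" by (simp add: le_nat_iff le_ceiling_iff)
  qed
  then have "finite (g ` ?S)" by (rule finite_subset) simp
  moreover have "inj_on g ?S" using assms(1) by (rule inj_on_subset) blast
  ultimately show ?thesis by (rule finite_imageD)
qed

lemma LIMSEQ_finite_far:
  fixes y :: "nat \<Rightarrow> 'a::metric_space"
  assumes "y \<longlonglongrightarrow> x" "e > 0"
  shows "finite {n\<in>UNIV. e \<le> dist x (y n)}"
proof -
  obtain N where "\<forall>n\<ge>N. dist (y n) x < e" using assms lim_sequentially by blast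
  then have "{n\<in>UNIV. e \<le> dist x (y n)} \<subseteq> {..<N}"
    by (auto simp: dist_commute) (meson leD leI)
  then show ?thesis using finite_subset by blast
qed

section \<open>Capturing countably many witnesses by one countable compact set\<close>

text \<open>L consists of x and the parts of the witnesses inside balls around x whose
  radii exceed dist x (p j) but tend to 0.\<close>

lemma capture_countably_many:
  fixes x :: "'a::metric_space"
  assumes wo: "Well_order r" and "countable P" and "x \<in> F"
    and witness: "\<And>j. j \<in> P \<Longrightarrow>
       \<exists>K. countable K \<and> compact K \<and> K \<subseteq> F \<and> p j \<in> iter_fab_deriv f a b r K (\<sigma> j)"
    and accumulate: "\<And>e. e > 0 \<Longrightarrow> finite {j\<in>P. e \<le> dist x (p j)}"
  shows "\<exists>L. countable L \<and> compact L \<and> L \<subseteq> F \<and>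
            (\<forall>j\<in>P. p j \<in> iter_fab_deriv f a b r L (\<sigma> j))"
proof -
  obtain K where K: "\<And>j. j \<in> P \<Longrightarrow>
      countable (K j) \<and> compact (K j) \<and> K j \<subseteq> F \<and> p j \<in> iter_fab_deriv f a b r (K j) (\<sigma> j)"
    using witness by metis
  define rad where "rad j = dist x (p j) + 1 / (real (to_nat_on P j) + 1)" for j
  define L where "L = insert x (\<Union>j\<in>P. K j \<inter> cball x (rad j))"
  have "finite {j\<in>P. e \<le> rad j}" if "e > 0" for e
  proof -
    have "finite {j\<in>P. e/2 \<le> dist x (p j)}"
      using accumulate[of "e/2"] that by simp
    moreover have "finite {j\<in>P. e/2 \<le> 1 / (real (to_nat_on P j) + 1)}"
      using finite_large_inverse_index[OF inj_on_to_nat_on[OF \<open>countable P\<close>], of "e/2"] that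
      by simp
    moreover have "{j\<in>P. e \<le> rad j} \<subseteq>
        {j\<in>P. e/2 \<le> dist x (p j)} \<union> {j\<in>P. e/2 \<le> 1 / (real (to_nat_on P j) + 1)}"
      unfolding rad_def by auto
    ultimately show ?thesis by (meson finite_UnI finite_subset)
  qed
  then have "compact L"
    unfolding L_def using K by (intro compact_shrinking_union) blast+
  moreover have "countable L" "L \<subseteq> F"
    unfolding L_def using K \<open>countable P\<close> \<open>x \<in> F\<close> by auto
  moreover have "p j \<in> iter_fab_deriv f a b r L (\<sigma> j)" if "j \<in> P" for j
  proof (rule iter_fab_deriv_transfer[OF wo])
    show "p j \<in> iter_fab_deriv f a b r (K j) (\<sigma> j)" using K[OF that] by blast
    show "dist x (p j) < rad j" by (simp add: rad_def)
    show "K j \<inter> cball x (rad j) \<subseteq> L" using that by (auto simp: L_def)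
  qed
  ultimately show ?thesis by blast
qed

text \<open>Apply capture to a sequence converging to x.\<close>

lemma capture_closure_point:
  fixes x :: "'a::metric_space"
  assumes wo: "Well_order r" and "x \<in> F"
    and x: "x \<in> closure (iter_fab_deriv f a b r F j \<inter> S)"
    and witness: "\<And>y. y \<in> iter_fab_deriv f a b r F j \<Longrightarrow>
       \<exists>K. countable K \<and> compact K \<and> K \<subseteq> F \<and> y \<in> iter_fab_deriv f a b r K j"
  shows "\<exists>L. countable L \<and> compact L \<and> L \<subseteq> F \<and> x \<in> closure (iter_fab_deriv f a b r L j \<inter> S)"
proof -
  obtain y where y: "\<forall>n. y n \<in> iter_fab_deriv f a b r F j \<inter> S" "y \<longlonglongrightarrow> x"
    using x unfolding closure_sequential by blast
  have "\<exists>L. countable L \<and> compact L \<and> L \<subseteq> F \<and> (\<forall>n\<in>UNIV. y n \<in> iter_fab_deriv f a b r L j)"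
  proof (rule capture_countably_many[OF wo countableI_type \<open>x \<in> F\<close>])
    show "\<exists>K. countable K \<and> compact K \<and> K \<subseteq> F \<and> y n \<in> iter_fab_deriv f a b r K j" for n
      using witness y(1) by blast
    show "finite {n\<in>UNIV. e \<le> dist x (y n)}" if "e > 0" for e
      using LIMSEQ_finite_far[OF y(2) that] .
  qed
  then obtain L where L: "countable L" "compact L" "L \<subseteq> F" "\<forall>n. y n \<in> iter_fab_deriv f a b r L j"
    by blast
  have "(\<forall>n. y n \<in> iter_fab_deriv f a b r L j \<inter> S) \<and> y \<longlonglongrightarrow> x"
    using L(4) y by blast
  then have "x \<in> closure (iter_fab_deriv f a b r L j \<inter> S)"
    unfolding closure_sequential by blast
  with L show ?thesis by blast
qed

text \<open>By
  induction on the rank: at rank 0 the singleton works; at a successor rank the two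
  closure conditions are captured separately by capture_closure_point and the two
  witnesses are united; at a limit rank the countably many witnesses of x, one for
  each smaller rank, are captured by capture_countably_many.\<close>

lemma iter_fab_deriv_countable_compact_witness:
  fixes f :: "'a::metric_space \<Rightarrow> real"
  assumes wo: "Well_order r" and "countable (Field r)" and "closed F"
  shows "x \<in> iter_fab_deriv f a b r F i \<Longrightarrow>
           \<exists>K. countable K \<and> compact K \<and> K \<subseteq> F \<and> x \<in> iter_fab_deriv f a b r K i"
  using wo
proof (induction i arbitrary: x rule: Well_order_rank_induct)
  case (initial i)
  then have "x \<in> F" using wo by (simp add: iter_fab_deriv_initial)
  moreover have "iter_fab_deriv f a b r {x} i = {x}"
    using wo initial.hyps by (rule iter_fab_deriv_initial)
  ultimately show ?case by (intro exI[of _ "{x}"]) simp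
next
  case (succ i j)
  note iter_succ = iter_fab_deriv_succ[OF wo succ.hyps]
  have "x \<in> F" using succ.prems iter_fab_deriv_subset[OF wo \<open>closed F\<close>] by blast
  have "x \<in> closure (iter_fab_deriv f a b r F j \<inter> {y. f y < a})"
       "x \<in> closure (iter_fab_deriv f a b r F j \<inter> {y. f y > b})"
    using succ.prems by (simp_all add: iter_succ fab_deriv_def)
  then obtain L1 L2 where L: "countable L1" "compact L1" "L1 \<subseteq> F" "countable L2" "compact L2" "L2 \<subseteq> F"
    and x: "x \<in> closure (iter_fab_deriv f a b r L1 j \<inter> {y. f y < a})"
           "x \<in> closure (iter_fab_deriv f a b r L2 j \<inter> {y. f y > b})"
    using capture_closure_point[OF wo \<open>x \<in> F\<close> _ succ.IH] by metis
  have "closure (iter_fab_deriv f a b r L j \<inter> S) \<subseteq> closure (iter_fab_deriv f a b r (L1 \<union> L2) j \<inter> S)"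
    if "L \<subseteq> L1 \<union> L2" for L S
    using iter_fab_deriv_mono[OF wo that] by (intro closure_mono) blast
  with x have "x \<in> fab_deriv f a b (iter_fab_deriv f a b r (L1 \<union> L2) j)"
    unfolding fab_deriv_def by blast
  with L show ?case by (intro exI[of _ "L1 \<union> L2"]) (simp add: iter_succ compact_Un)
next
  case (limit i j)
  note iter_limit = iter_fab_deriv_limit[OF wo limit.hyps]
  define P where "P = {k. (k, i) \<in> r - Id}"
  have "countable P"
    using \<open>countable (Field r)\<close> by (rule countable_subset[rotated]) (auto simp: P_def Field_def)
  have "x \<in> F" using limit.prems iter_fab_deriv_subset[OF wo \<open>closed F\<close>] by blast
  have "\<exists>L. countable L \<and> compact L \<and> L \<subseteq> F \<and> (\<forall>k\<in>P. x \<in> iter_fab_deriv f a b r L k)"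
  proof (rule capture_countably_many[OF wo \<open>countable P\<close> \<open>x \<in> F\<close>, where p="\<lambda>_. x" and \<sigma>=id, simplified])
    show "\<exists>K. countable K \<and> compact K \<and> K \<subseteq> F \<and> x \<in> iter_fab_deriv f a b r K k" if "k \<in> P" for k
      using that limit.prems limit.IH by (auto simp: iter_limit P_def)
  qed
  then obtain L where "countable L" "compact L" "L \<subseteq> F" "\<forall>k\<in>P. x \<in> iter_fab_deriv f a b r L k"
    by blast
  then show ?case by (intro exI[of _ L]) (auto simp: iter_limit P_def)
qed

theorem lemma4p3:
  fixes f :: "'a::polish_space \<Rightarrow> real" and a b :: real
    and F :: "'a set" and x :: 'a
    and r :: "'i rel" and \<xi> :: 'i
  assumes "baire1 f" and "a < b"
    and "closed F"
    and "Well_order r" and "countable (Field r)" and "\<xi> \<in> Field r"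
    and "x \<in> iter_fab_deriv f a b r F \<xi>"
  shows "\<exists>K. countable K \<and> compact K \<and> K \<subseteq> F \<and> x \<in> iter_fab_deriv f a b r K \<xi>"
  using iter_fab_deriv_countable_compact_witness[OF assms(4,5,3) assms(7)] .

end
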